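(* The lamplighter group $G=\mathbb Z_2\wr\mathbb Z=(\bigoplus_{\mathbb Z}\mathbb Z_2)\rtimes\mathbb Z$ does not have the ISR property.
   Context: For a countable discrete group $G$, $L(G)$ is the group von Neumann algebra generated by the left regular unitaries $u_g$ on $\ell^2(G)$; for a subgroup $N$, $L(N)$ is the von Neumann subalgebra generated by $\{u_g:g\in N\}$. A von Neumann subalgebra $\mathcal M\subseteq L(G)$ is $G$-invariant if $u_g\mathcal M u_g^*\subseteq\mathcal M$ for all $g\in G$. $G$ has the ISR property if every $G$-invariant von Neumann subalgebra of $L(G)$ equals $L(N)$ for some normal subgroup $N\trianglelefteq G$. In $\mathbb Z_2\wr\mathbb Z$ the generator of $\mathbb Z$ acts on $\bigoplus_{\mathbb Z}\mathbb Z_2$ by shifting coordinates. *)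

theory Defs
  imports "HOL-Analysis.Infinite_Sum" "HOL-Algebra.Coset"
begin

definition l2 :: "('a, 'b) monoid_scheme \<Rightarrow> ('a \<Rightarrow> complex) set" where
  "l2 G = {x. (\<forall>g. g \<notin> carrier G \<longrightarrow> x g = 0) \<and>
              (\<lambda>g. (cmod (x g))\<^sup>2) summable_on carrier G}"

definition l2_inner :: "('a, 'b) monoid_scheme \<Rightarrow> ('a \<Rightarrow> complex) \<Rightarrow> ('a \<Rightarrow> complex) \<Rightarrow> complex" where
  "l2_inner G x y = (\<Sum>\<^sub>\<infinity>g\<in>carrier G. cnj (x g) * y g)"

definition l2_norm :: "('a, 'b) monoid_scheme \<Rightarrow> ('a \<Rightarrow> complex) \<Rightarrow> real" where
  "l2_norm G x = sqrt (\<Sum>\<^sub>\<infinity>g\<in>carrier G. (cmod (x g))\<^sup>2)"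

text \<open>Bounded linear operators on l2(G). An operator is represented by a total map
  which is required to send every non-l2 function to 0, so that operators are
  identified with their action on l2(G).\<close>

definition bops :: "('a, 'b) monoid_scheme \<Rightarrow> (('a \<Rightarrow> complex) \<Rightarrow> ('a \<Rightarrow> complex)) set" where
  "bops G = {T. (\<forall>x\<in>l2 G. T x \<in> l2 G)
              \<and> (\<forall>x\<in>l2 G. \<forall>y\<in>l2 G. \<forall>a b. T (\<lambda>g. a * x g + b * y g) = (\<lambda>g. a * T x g + b * T y g))
              \<and> (\<exists>C. \<forall>x\<in>l2 G. l2_norm G (T x) \<le> C * l2_norm G x)
              \<and> (\<forall>x. x \<notin> l2 G \<longrightarrow> T x = (\<lambda>_. 0))}"

definition commutant :: "('a, 'b) monoid_scheme \<Rightarrow> (('a \<Rightarrow> complex) \<Rightarrow> ('a \<Rightarrow> complex)) set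
    \<Rightarrow> (('a \<Rightarrow> complex) \<Rightarrow> ('a \<Rightarrow> complex)) set" where
  "commutant G S = {T \<in> bops G. \<forall>A\<in>S. T \<circ> A = A \<circ> T}"

definition star_closed :: "('a, 'b) monoid_scheme \<Rightarrow> (('a \<Rightarrow> complex) \<Rightarrow> ('a \<Rightarrow> complex)) set \<Rightarrow> bool" where
  "star_closed G M \<longleftrightarrow> (\<forall>T\<in>M. \<exists>S\<in>M. \<forall>x\<in>l2 G. \<forall>y\<in>l2 G. l2_inner G (T x) y = l2_inner G x (S y))"

text \<open>von Neumann algebra on l2(G): a self-adjoint set of bounded operators equal to
  its double commutant (equivalently, by the bicommutant theorem, a weakly closed
  unital *-subalgebra).\<close>

definition von_neumann_algebra :: "('a, 'b) monoid_scheme \<Rightarrow> (('a \<Rightarrow> complex) \<Rightarrow> ('a \<Rightarrow> complex)) set \<Rightarrow> bool" where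
  "von_neumann_algebra G M \<longleftrightarrow> M \<subseteq> bops G \<and> star_closed G M \<and> commutant G (commutant G M) = M"

definition lreg :: "('a, 'b) monoid_scheme \<Rightarrow> 'a \<Rightarrow> ('a \<Rightarrow> complex) \<Rightarrow> ('a \<Rightarrow> complex)" where
  "lreg G g = (\<lambda>x. if x \<in> l2 G then (\<lambda>h. if h \<in> carrier G then x (inv\<^bsub>G\<^esub> g \<otimes>\<^bsub>G\<^esub> h) else 0)
                    else (\<lambda>_. 0))"

definition group_vN :: "('a, 'b) monoid_scheme \<Rightarrow> 'a set \<Rightarrow> (('a \<Rightarrow> complex) \<Rightarrow> ('a \<Rightarrow> complex)) set" where
  "group_vN G N = commutant G (commutant G (lreg G ` N))"

definition G_invariant :: "('a, 'b) monoid_scheme \<Rightarrow> (('a \<Rightarrow> complex) \<Rightarrow> ('a \<Rightarrow> complex)) set \<Rightarrow> bool" where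
  "G_invariant G M \<longleftrightarrow> (\<forall>g\<in>carrier G. \<forall>T\<in>M. lreg G g \<circ> T \<circ> lreg G (inv\<^bsub>G\<^esub> g) \<in> M)"

definition has_ISR :: "('a, 'b) monoid_scheme \<Rightarrow> bool" where
  "has_ISR G \<longleftrightarrow> (\<forall>M. von_neumann_algebra G M \<and> M \<subseteq> group_vN G (carrier G) \<and> G_invariant G M
      \<longrightarrow> (\<exists>N. N \<lhd> G \<and> M = group_vN G N))"

text \<open>Elements (f, n): f a finitely supported configuration Z -> Z_2 (as bool, xor = addition),
  n in Z. Product (f,n)(g,m) = (f + shift_n g, n + m) with (shift_n g)(k) = g(k - n).\<close>

definition lamplighter :: "((int \<Rightarrow> bool) \<times> int) monoid" where
  "lamplighter = \<lparr> carrier = {(f, n). finite {k. f k}},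
                   mult = (\<lambda>(f, n) (g, m). (\<lambda>k. f k \<noteq> g (k - n), n + m)),
                   one = (\<lambda>_. False, 0) \<rparr>"

end

theory Submission
  imports Defs
begin

text \<open>
  Let \<open>e(i)\<close> be the lamp at position \<open>i\<close> and \<open>E(i) = (1 - u(e(i)))/2\<close>.  The projections
  \<open>p(j) = E(j) E(j + 1)\<close> lie in \<open>L(G)\<close>, and conjugation by \<open>(f, n)\<close> maps \<open>p(j)\<close> to \<open>p(j + n)\<close>,
  so their bicommutant \<open>M\<close> is a \<open>G\<close>-invariant von Neumann subalgebra of \<open>L(G)\<close>.  If \<open>M = L(N)\<close>,
  then \<open>e(0) \<in> N\<close>, because every operator in \<open>L(N)\<close> maps \<open>\<delta>\<^sub>1\<close> into \<open>\<ell>\<^sup>2(N)\<close> while \<open>p(0) \<delta>\<^sub>1\<close>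
  has coefficient \<open>-1/4\<close> at \<open>e(0)\<close>; hence \<open>u(e(0)) \<in> M\<close>.  But the reflection \<open>W = 1 - 2 Q P\<close>,
  where \<open>Q = (1 + u(e(-1))) (1 + u(e(1)))/4\<close> and \<open>P\<close> is the projection onto the elements with
  lamp \<open>0\<close> lit, commutes with every \<open>p(j)\<close> but not with \<open>u(e(0))\<close>.
\<close>

section \<open>The Hilbert space \<open>\<ell>\<^sup>2(G)\<close>\<close>

definition l2_sqnorm :: "('a, 'b) monoid_scheme \<Rightarrow> ('a \<Rightarrow> complex) \<Rightarrow> real" where
  "l2_sqnorm G x = (\<Sum>\<^sub>\<infinity>g\<in>carrier G. (cmod (x g))\<^sup>2)"

definition l2_basis :: "'a \<Rightarrow> 'a \<Rightarrow> complex" where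
  "l2_basis g = (\<lambda>h. if h = g then 1 else 0)"

lemma l2_vanishes_outside: "x \<in> l2 G \<Longrightarrow> g \<notin> carrier G \<Longrightarrow> x g = 0"
  by (simp add: l2_def)

lemma l2_summable: "x \<in> l2 G \<Longrightarrow> (\<lambda>g. (cmod (x g))\<^sup>2) summable_on carrier G"
  by (simp add: l2_def)

lemma l2_has_sum_sqnorm: "x \<in> l2 G \<Longrightarrow> ((\<lambda>g. (cmod (x g))\<^sup>2) has_sum l2_sqnorm G x) (carrier G)"
  unfolding l2_sqnorm_def by (simp add: l2_summable)

lemma l2_sqnorm_nonneg: "0 \<le> l2_sqnorm G x"
  unfolding l2_sqnorm_def by (rule infsum_nonneg) auto

lemma l2_norm_eq_sqrt: "l2_norm G x = sqrt (l2_sqnorm G x)"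
  by (simp add: l2_norm_def l2_sqnorm_def)

lemma zero_in_l2: "(\<lambda>_. 0) \<in> l2 G"
  by (simp add: l2_def)

lemma l2_dominated:
  assumes "\<And>g. g \<notin> carrier G \<Longrightarrow> y g = 0" "h summable_on carrier G"
    "\<And>g. g \<in> carrier G \<Longrightarrow> (cmod (y g))\<^sup>2 \<le> h g"
  shows "y \<in> l2 G" "l2_sqnorm G y \<le> infsum h (carrier G)"
proof -
  have s: "(\<lambda>g. (cmod (y g))\<^sup>2) summable_on carrier G"
    by (rule summable_on_comparison_test[OF assms(2)]) (use assms(3) in auto)
  then show "y \<in> l2 G" using assms(1) by (simp add: l2_def)
  show "l2_sqnorm G y \<le> infsum h (carrier G)"
    unfolding l2_sqnorm_def by (rule infsum_mono[OF s assms(2)]) (use assms(3) in auto)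
qed

lemma norm_lincomb_square_le:
  fixes a b u v :: complex
  shows "(cmod (a * u + b * v))\<^sup>2 \<le> 2 * (cmod a)\<^sup>2 * (cmod u)\<^sup>2 + 2 * (cmod b)\<^sup>2 * (cmod v)\<^sup>2"
proof -
  define p q where "p = cmod a * cmod u" and "q = cmod b * cmod v"
  have "cmod (a * u + b * v) \<le> p + q"
    using norm_triangle_ineq[of "a * u" "b * v"] by (simp add: norm_mult p_def q_def)
  then have "(cmod (a * u + b * v))\<^sup>2 \<le> (p + q)\<^sup>2"
    by (rule power_mono) simp
  also have "\<dots> \<le> 2 * p\<^sup>2 + 2 * q\<^sup>2"
    using zero_le_power2[of "p - q"] by (simp add: power2_eq_square algebra_simps)
  finally show ?thesis by (simp add: p_def q_def power_mult_distrib)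
qed

lemma
  assumes x: "x \<in> l2 G" and y: "y \<in> l2 G"
  shows l2_lincomb: "(\<lambda>g. a * x g + b * y g) \<in> l2 G"
    and l2_sqnorm_lincomb_le:
      "l2_sqnorm G (\<lambda>g. a * x g + b * y g) \<le> 2 * (cmod a)\<^sup>2 * l2_sqnorm G x + 2 * (cmod b)\<^sup>2 * l2_sqnorm G y"
proof -
  let ?h = "\<lambda>g. 2 * (cmod a)\<^sup>2 * (cmod (x g))\<^sup>2 + 2 * (cmod b)\<^sup>2 * (cmod (y g))\<^sup>2"
  have h: "(?h has_sum (2 * (cmod a)\<^sup>2 * l2_sqnorm G x + 2 * (cmod b)\<^sup>2 * l2_sqnorm G y)) (carrier G)"
    by (intro has_sum_add has_sum_cmult_right l2_has_sum_sqnorm x y)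
  have z: "\<And>g. g \<notin> carrier G \<Longrightarrow> a * x g + b * y g = 0"
    using x y by (simp add: l2_vanishes_outside)
  note dom = l2_dominated[OF z has_sum_imp_summable[OF h] norm_lincomb_square_le]
  show "(\<lambda>g. a * x g + b * y g) \<in> l2 G" by (rule dom(1))
  show "l2_sqnorm G (\<lambda>g. a * x g + b * y g) \<le> 2 * (cmod a)\<^sup>2 * l2_sqnorm G x + 2 * (cmod b)\<^sup>2 * l2_sqnorm G y"
    using dom(2) infsumI[OF h] by simp
qed

lemma norm_cnj_mult_le:
  fixes u v :: complex and t :: real
  assumes "t > 0"
  shows "cmod (cnj u * v) \<le> t / 2 * (cmod u)\<^sup>2 + 1 / (2 * t) * (cmod v)\<^sup>2"
proof -
  have "0 \<le> (t * cmod u - cmod v)\<^sup>2 / t" using assms by simp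
  then have "0 \<le> t * (cmod u)\<^sup>2 - 2 * cmod u * cmod v + (cmod v)\<^sup>2 / t"
    using assms by (simp add: power2_eq_square field_simps)
  then show ?thesis by (simp add: norm_mult field_simps)
qed

lemma l2_inner_abs_summable:
  assumes "x \<in> l2 G" "y \<in> l2 G"
  shows "(\<lambda>g. norm (cnj (x g) * y g)) summable_on carrier G"
proof (rule abs_summable_on_comparison_test')
  show "(\<lambda>g. 1 / 2 * (cmod (x g))\<^sup>2 + 1 / (2 * 1) * (cmod (y g))\<^sup>2) summable_on carrier G"
    by (intro summable_on_add summable_on_cmult_right l2_summable assms)
qed (use norm_cnj_mult_le[of 1] in simp)

lemma l2_inner_has_sum:
  assumes "x \<in> l2 G" "y \<in> l2 G"
  shows "((\<lambda>g. cnj (x g) * y g) has_sum l2_inner G x y) (carrier G)"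
  unfolding l2_inner_def using abs_summable_summable[OF l2_inner_abs_summable[OF assms]] by simp

lemma l2_inner_bound:
  assumes "x \<in> l2 G" "y \<in> l2 G" "t > 0"
  shows "cmod (l2_inner G x y) \<le> t / 2 * l2_sqnorm G x + 1 / (2 * t) * l2_sqnorm G y"
proof -
  have "cmod (l2_inner G x y) \<le> (\<Sum>\<^sub>\<infinity>g\<in>carrier G. norm (cnj (x g) * y g))"
    unfolding l2_inner_def by (rule norm_infsum_bound[OF l2_inner_abs_summable[OF assms(1,2)]])
  also have "\<dots> \<le> t / 2 * l2_sqnorm G x + 1 / (2 * t) * l2_sqnorm G y"
  proof (rule has_sum_mono[OF has_sum_infsum[OF l2_inner_abs_summable[OF assms(1,2)]]])
    show "((\<lambda>g. t / 2 * (cmod (x g))\<^sup>2 + 1 / (2 * t) * (cmod (y g))\<^sup>2) has_sum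
        (t / 2 * l2_sqnorm G x + 1 / (2 * t) * l2_sqnorm G y)) (carrier G)"
      by (intro has_sum_add has_sum_cmult_right l2_has_sum_sqnorm assms)
  qed (rule norm_cnj_mult_le[OF assms(3)])
  finally show ?thesis .
qed

lemma l2_sqnorm_eq_0_imp:
  assumes "x \<in> l2 G" "l2_sqnorm G x = 0" "g \<in> carrier G"
  shows "x g = 0"
  using nonneg_infsum_le_0D[of "\<lambda>g. (cmod (x g))\<^sup>2" "carrier G" g] assms l2_summable
  unfolding l2_sqnorm_def by auto

lemma l2_cauchy_schwarz:
  assumes x: "x \<in> l2 G" and y: "y \<in> l2 G"
  shows "cmod (l2_inner G x y) \<le> l2_norm G x * l2_norm G y"
proof (cases "l2_sqnorm G x = 0 \<or> l2_sqnorm G y = 0")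
  case True
  then have "\<And>g. g \<in> carrier G \<Longrightarrow> cnj (x g) * y g = 0"
    using l2_sqnorm_eq_0_imp x y by fastforce
  then have "l2_inner G x y = 0"
    unfolding l2_inner_def by (simp add: infsum_0)
  then show ?thesis by (simp add: l2_norm_eq_sqrt l2_sqnorm_nonneg)
next
  case False
  define a b where "a = l2_norm G x" and "b = l2_norm G y"
  have pos: "a > 0" "b > 0"
    using False l2_sqnorm_nonneg[of G x] l2_sqnorm_nonneg[of G y]
    by (auto simp: a_def b_def l2_norm_eq_sqrt order_le_less)
  have sq: "l2_sqnorm G x = a\<^sup>2" "l2_sqnorm G y = b\<^sup>2"
    by (simp_all add: a_def b_def l2_norm_eq_sqrt l2_sqnorm_nonneg)
  have "cmod (l2_inner G x y) \<le> b / a / 2 * a\<^sup>2 + 1 / (2 * (b / a)) * b\<^sup>2"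
    using l2_inner_bound[OF x y, of "b / a"] pos by (simp add: sq)
  also have "\<dots> = a * b" using pos by (simp add: field_simps power2_eq_square)
  finally show ?thesis by (simp add: a_def b_def)
qed

lemma l2_basis_in_l2: "g \<in> carrier G \<Longrightarrow> l2_basis g \<in> l2 G"
  unfolding l2_def l2_basis_def
  by (auto intro!: finite_nonzero_values_imp_summable_on finite_subset[of _ "{g}"] split: if_splits)

lemma l2_inner_basis: "g \<in> carrier G \<Longrightarrow> l2_inner G (l2_basis g) z = z g"
proof -
  assume g: "g \<in> carrier G"
  have "(\<Sum>\<^sub>\<infinity>h\<in>carrier G. cnj (l2_basis g h) * z h) = (\<Sum>\<^sub>\<infinity>h\<in>{g}. cnj (l2_basis g h) * z h)"
    by (rule infsum_cong_neutral) (use g in \<open>auto simp: l2_basis_def\<close>)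
  then show ?thesis by (simp add: l2_inner_def l2_basis_def)
qed

lemma l2_inner_lincomb_right:
  assumes "x \<in> l2 G" "y \<in> l2 G" "z \<in> l2 G"
  shows "l2_inner G x (\<lambda>g. a * y g + b * z g) = a * l2_inner G x y + b * l2_inner G x z"
proof -
  have "((\<lambda>g. a * (cnj (x g) * y g) + b * (cnj (x g) * z g)) has_sum
      (a * l2_inner G x y + b * l2_inner G x z)) (carrier G)"
    by (intro has_sum_add has_sum_cmult_right l2_inner_has_sum assms)
  then show ?thesis unfolding l2_inner_def by (intro infsumI) (simp add: algebra_simps)
qed

lemma l2_inner_cnj: "l2_inner G y x = cnj (l2_inner G x y)"
  by (simp add: l2_inner_def mult.commute flip: infsum_cnj)

lemma l2_inner_lincomb_left:
  assumes "x \<in> l2 G" "y \<in> l2 G" "z \<in> l2 G"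
  shows "l2_inner G (\<lambda>g. a * x g + b * y g) z = cnj a * l2_inner G x z + cnj b * l2_inner G y z"
  using l2_inner_lincomb_right[OF assms(3,1,2), of a b]
  by (simp add: l2_inner_cnj[of G _ z])

lemma l2_eqI:
  assumes "u \<in> l2 G" "v \<in> l2 G" "\<And>x. x \<in> l2 G \<Longrightarrow> l2_inner G x u = l2_inner G x v"
  shows "u = v"
proof
  fix h show "u h = v h"
  proof (cases "h \<in> carrier G")
    case True
    then show ?thesis using assms(3)[OF l2_basis_in_l2[OF True]] by (simp add: l2_inner_basis)
  next
    case False
    then show ?thesis using assms(1,2) by (simp add: l2_vanishes_outside)
  qed
qed

lemma has_sum_sum:
  fixes f :: "'i \<Rightarrow> 'a \<Rightarrow> 'c::topological_comm_monoid_add"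
  assumes "finite I" "\<And>i. i \<in> I \<Longrightarrow> (f i has_sum s i) A"
  shows "((\<lambda>x. \<Sum>i\<in>I. f i x) has_sum (\<Sum>i\<in>I. s i)) A"
  using assms by (induction I rule: finite_induct) (auto intro: has_sum_add)

lemma l2_inner_sum_left:
  assumes "finite I" "\<And>i. i \<in> I \<Longrightarrow> u i \<in> l2 G" "y \<in> l2 G"
  shows "l2_inner G (\<lambda>h. \<Sum>i\<in>I. c i * u i h) y = (\<Sum>i\<in>I. cnj (c i) * l2_inner G (u i) y)"
proof -
  have "((\<lambda>h. \<Sum>i\<in>I. cnj (c i) * (cnj (u i h) * y h)) has_sum (\<Sum>i\<in>I. cnj (c i) * l2_inner G (u i) y)) (carrier G)"
    by (intro has_sum_sum has_sum_cmult_right l2_inner_has_sum assms)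
  then show ?thesis
    unfolding l2_inner_def by (intro infsumI) (simp add: cnj_sum sum_distrib_right mult.assoc)
qed

section \<open>Bounded operators\<close>

lemma bops_l2: "T \<in> bops G \<Longrightarrow> x \<in> l2 G \<Longrightarrow> T x \<in> l2 G"
  by (simp add: bops_def)

lemma bops_linear: "T \<in> bops G \<Longrightarrow> x \<in> l2 G \<Longrightarrow> y \<in> l2 G \<Longrightarrow>
    T (\<lambda>g. a * x g + b * y g) = (\<lambda>g. a * T x g + b * T y g)"
  by (simp add: bops_def)

lemma bops_outside: "T \<in> bops G \<Longrightarrow> x \<notin> l2 G \<Longrightarrow> T x = (\<lambda>_. 0)"
  by (simp add: bops_def)

lemma bops_zero: "T \<in> bops G \<Longrightarrow> T (\<lambda>_. 0) = (\<lambda>_. 0)"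
  using bops_linear[of T G "\<lambda>_. 0" "\<lambda>_. 0" 0 0] zero_in_l2[of G] by simp

lemma bops_eqI:
  assumes "A \<in> bops G" "B \<in> bops G" "\<And>x. x \<in> l2 G \<Longrightarrow> A x = B x"
  shows "A = B"
proof
  fix x show "A x = B x"
    using assms bops_outside[of A G x] bops_outside[of B G x] by (cases "x \<in> l2 G") auto
qed

lemma bops_bound:
  assumes "T \<in> bops G"
  obtains K where "K > 0" "\<And>x. x \<in> l2 G \<Longrightarrow> l2_sqnorm G (T x) \<le> K * l2_sqnorm G x"
proof -
  obtain C where C: "\<forall>x\<in>l2 G. l2_norm G (T x) \<le> C * l2_norm G x"
    using assms by (auto simp: bops_def)
  define D where "D = max C 1"
  have "l2_sqnorm G (T x) \<le> D\<^sup>2 * l2_sqnorm G x" if x: "x \<in> l2 G" for x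
  proof -
    have "sqrt (l2_sqnorm G (T x)) \<le> D * sqrt (l2_sqnorm G x)"
      using bspec[OF C x] mult_right_mono[of C D "sqrt (l2_sqnorm G x)"]
      by (simp add: D_def l2_norm_eq_sqrt l2_sqnorm_nonneg)
    then have "(sqrt (l2_sqnorm G (T x)))\<^sup>2 \<le> (D * sqrt (l2_sqnorm G x))\<^sup>2"
      by (rule power_mono) (simp add: l2_sqnorm_nonneg)
    then show ?thesis by (simp add: power_mult_distrib l2_sqnorm_nonneg)
  qed
  moreover have "D\<^sup>2 > 0" unfolding D_def by simp
  ultimately show ?thesis using that by blast
qed

lemma bopsI:
  assumes "\<And>x. x \<in> l2 G \<Longrightarrow> T x \<in> l2 G"
    "\<And>x y a b. x \<in> l2 G \<Longrightarrow> y \<in> l2 G \<Longrightarrow> T (\<lambda>g. a * x g + b * y g) = (\<lambda>g. a * T x g + b * T y g)"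
    "\<And>x. x \<in> l2 G \<Longrightarrow> l2_sqnorm G (T x) \<le> K * l2_sqnorm G x"
    "\<And>x. x \<notin> l2 G \<Longrightarrow> T x = (\<lambda>_. 0)"
  shows "T \<in> bops G"
proof -
  define K' where "K' = max K 0"
  have "l2_norm G (T x) \<le> sqrt K' * l2_norm G x" if x: "x \<in> l2 G" for x
  proof -
    have "K * l2_sqnorm G x \<le> K' * l2_sqnorm G x"
      by (rule mult_right_mono) (simp_all add: K'_def l2_sqnorm_nonneg)
    then have "l2_sqnorm G (T x) \<le> K' * l2_sqnorm G x"
      using assms(3)[OF x] by linarith
    then show ?thesis unfolding l2_norm_eq_sqrt real_sqrt_mult[symmetric] by (rule real_sqrt_le_mono)
  qed
  then show ?thesis using assms unfolding bops_def by blast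
qed

lemma bops_sum:
  assumes "T \<in> bops G" "finite I" "\<And>i. i \<in> I \<Longrightarrow> y i \<in> l2 G"
  shows "(\<lambda>g. \<Sum>i\<in>I. c i * y i g) \<in> l2 G \<and> T (\<lambda>g. \<Sum>i\<in>I. c i * y i g) = (\<lambda>g. \<Sum>i\<in>I. c i * T (y i) g)"
  using assms(2,3)
proof (induction I rule: finite_induct)
  case empty
  then show ?case using bops_zero[OF assms(1)] zero_in_l2 by simp
next
  case (insert j I)
  let ?S = "\<lambda>g. \<Sum>i\<in>I. c i * y i g"
  have IH: "?S \<in> l2 G" "T ?S = (\<lambda>g. \<Sum>i\<in>I. c i * T (y i) g)" and yj: "y j \<in> l2 G"
    using insert by auto
  have split: "(\<lambda>g. \<Sum>i\<in>insert j I. c i * y i g) = (\<lambda>g. c j * y j g + 1 * ?S g)"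
    using insert.hyps by simp
  show ?case
    unfolding split bops_linear[OF assms(1) yj IH(1)] IH(2)
    using l2_lincomb[OF yj IH(1), of "c j" 1] insert.hyps by simp
qed

lemma bops_comp:
  assumes A: "A \<in> bops G" and B: "B \<in> bops G"
  shows "A \<circ> B \<in> bops G"
proof -
  obtain KA where KA: "KA > 0" "\<And>x. x \<in> l2 G \<Longrightarrow> l2_sqnorm G (A x) \<le> KA * l2_sqnorm G x"
    using bops_bound[OF A] by blast
  obtain KB where KB: "\<And>x. x \<in> l2 G \<Longrightarrow> l2_sqnorm G (B x) \<le> KB * l2_sqnorm G x"
    using bops_bound[OF B] by blast
  show ?thesis
  proof (rule bopsI[where K = "KA * KB"])
    fix x assume x: "x \<in> l2 G"
    show "(A \<circ> B) x \<in> l2 G" using bops_l2[OF A bops_l2[OF B x]] by simp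
    have "l2_sqnorm G (A (B x)) \<le> KA * l2_sqnorm G (B x)" using KA(2) bops_l2[OF B x] .
    also have "\<dots> \<le> KA * (KB * l2_sqnorm G x)" using KB[OF x] KA(1) by simp
    finally show "l2_sqnorm G ((A \<circ> B) x) \<le> KA * KB * l2_sqnorm G x" by (simp add: mult.assoc)
  next
    fix x y a b assume "x \<in> l2 G" "y \<in> l2 G"
    then show "(A \<circ> B) (\<lambda>g. a * x g + b * y g) = (\<lambda>g. a * (A \<circ> B) x g + b * (A \<circ> B) y g)"
      by (simp add: bops_linear[OF B] bops_linear[OF A] bops_l2[OF B])
  next
    fix x assume "x \<notin> l2 G"
    then show "(A \<circ> B) x = (\<lambda>_. 0)" using bops_outside[OF B] bops_zero[OF A] by simp
  qed
qed

lemma l2_inner_bops_le: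
  assumes "T \<in> bops G" "\<And>x. x \<in> l2 G \<Longrightarrow> l2_sqnorm G (T x) \<le> K * l2_sqnorm G x"
    and x: "x \<in> l2 G" and y: "y \<in> l2 G"
  shows "cmod (l2_inner G (T x) y) \<le> sqrt (K * l2_sqnorm G x) * sqrt (l2_sqnorm G y)"
proof -
  have "cmod (l2_inner G (T x) y) \<le> l2_norm G (T x) * l2_norm G y"
    by (rule l2_cauchy_schwarz[OF bops_l2[OF assms(1) x] y])
  also have "\<dots> \<le> sqrt (K * l2_sqnorm G x) * sqrt (l2_sqnorm G y)"
    unfolding l2_norm_eq_sqrt using assms(2)[OF x] by (intro mult_right_mono) (simp_all add: l2_sqnorm_nonneg)
  finally show ?thesis .
qed

definition l2_restrict :: "'a set \<Rightarrow> ('a \<Rightarrow> complex) \<Rightarrow> 'a \<Rightarrow> complex" where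
  "l2_restrict S x = (\<lambda>h. if h \<in> S then x h else 0)"

lemma l2_restrict_eq_sum:
  assumes "finite F"
  shows "l2_restrict F c = (\<lambda>h. \<Sum>g\<in>F. c g * l2_basis g h)"
proof
  fix h
  have "(\<Sum>g\<in>F. c g * l2_basis g h) = (\<Sum>g\<in>F. if h = g then c g else 0)"
    by (rule sum.cong) (auto simp: l2_basis_def)
  then show "l2_restrict F c h = (\<Sum>g\<in>F. c g * l2_basis g h)"
    using assms by (simp add: l2_restrict_def)
qed

lemma l2_restrict_in_l2:
  assumes "x \<in> l2 G"
  shows "l2_restrict S x \<in> l2 G"
  by (rule l2_dominated(1)[OF _ l2_summable[OF assms]])
     (use assms in \<open>auto simp: l2_restrict_def l2_vanishes_outside\<close>)

lemma l2_restrict_finite_in_l2: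
  assumes "finite F" "F \<subseteq> carrier G"
  shows "l2_restrict F c \<in> l2 G"
proof -
  have "finite {h \<in> carrier G. (cmod (l2_restrict F c h))\<^sup>2 \<noteq> 0}"
    by (rule finite_subset[OF _ assms(1)]) (auto simp: l2_restrict_def split: if_splits)
  then show ?thesis using assms unfolding l2_def
    by (auto intro!: finite_nonzero_values_imp_summable_on simp: l2_restrict_def)
qed

lemma has_sum_sqnorm_restrict_finite:
  assumes "finite F" "F \<subseteq> carrier G"
  shows "((\<lambda>h. (cmod (l2_restrict F c h))\<^sup>2) has_sum (\<Sum>g\<in>F. (cmod (c g))\<^sup>2)) (carrier G)"
  by (rule has_sum_finite_neutralI[OF assms]) (auto simp: l2_restrict_def intro: sum.cong)

lemma l2_sqnorm_restrict_compl:
  assumes "x \<in> l2 G" "finite F" "F \<subseteq> carrier G"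
  shows "l2_sqnorm G (l2_restrict (- F) x) = l2_sqnorm G x - (\<Sum>g\<in>F. (cmod (x g))\<^sup>2)"
proof -
  have "((\<lambda>h. (cmod (x h))\<^sup>2 + - (cmod (l2_restrict F x h))\<^sup>2) has_sum
      (l2_sqnorm G x + - (\<Sum>g\<in>F. (cmod (x g))\<^sup>2))) (carrier G)"
    by (intro has_sum_add has_sum_uminusI l2_has_sum_sqnorm has_sum_sqnorm_restrict_finite assms)
  moreover have "(cmod (x h))\<^sup>2 + - (cmod (l2_restrict F x h))\<^sup>2 = (cmod (l2_restrict (- F) x h))\<^sup>2" for h
    by (simp add: l2_restrict_def)
  ultimately show ?thesis unfolding l2_sqnorm_def by (simp add: infsumI)
qed

lemma bops_restrict_finite:
  assumes "T \<in> bops G" "finite F" "F \<subseteq> carrier G"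
  shows "T (l2_restrict F c) = (\<lambda>h. \<Sum>g\<in>F. c g * T (l2_basis g) h)"
proof -
  have basis: "\<And>g. g \<in> F \<Longrightarrow> l2_basis g \<in> l2 G" using assms(3) by (intro l2_basis_in_l2) auto
  have "T (\<lambda>h. \<Sum>g\<in>F. c g * l2_basis g h) = (\<lambda>h. \<Sum>g\<in>F. c g * T (l2_basis g) h)"
    by (rule conjunct2[OF bops_sum[OF assms(1,2) basis, where c = c]])
  then show ?thesis unfolding l2_restrict_eq_sum[OF assms(2)] .
qed

lemma l2_inner_bops_restrict_finite:
  assumes "T \<in> bops G" "finite F" "F \<subseteq> carrier G" "y \<in> l2 G"
  shows "l2_inner G (T (l2_restrict F c)) y = (\<Sum>g\<in>F. cnj (c g) * l2_inner G (T (l2_basis g)) y)"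
proof -
  have "\<And>g. g \<in> F \<Longrightarrow> T (l2_basis g) \<in> l2 G"
    using assms(3) by (intro bops_l2[OF assms(1)] l2_basis_in_l2) auto
  then show ?thesis
    unfolding bops_restrict_finite[OF assms(1-3)] by (rule l2_inner_sum_left[OF assms(2) _ assms(4)])
qed

lemma l2_inner_bops_restrict_compl:
  assumes T: "T \<in> bops G" and x: "x \<in> l2 G" and y: "y \<in> l2 G"
  shows "l2_inner G (T x) y - l2_inner G (T (l2_restrict S x)) y = l2_inner G (T (l2_restrict (- S) x)) y"
proof -
  have r: "l2_restrict S x \<in> l2 G" "l2_restrict (- S) x \<in> l2 G"
    by (simp_all add: l2_restrict_in_l2 x)
  have "x = (\<lambda>h. 1 * l2_restrict S x h + 1 * l2_restrict (- S) x h)"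
    by (auto simp: l2_restrict_def)
  then have "T x = T (\<lambda>h. 1 * l2_restrict S x h + 1 * l2_restrict (- S) x h)"
    by (rule arg_cong)
  also have "\<dots> = (\<lambda>h. 1 * T (l2_restrict S x) h + 1 * T (l2_restrict (- S) x) h)"
    by (rule bops_linear[OF T r])
  finally show ?thesis
    using l2_inner_lincomb_left[OF bops_l2[OF T r(1)] bops_l2[OF T r(2)] y, of 1 1] by simp
qed

lemma tendsto_l2_inner_bops_restrict:
  assumes T: "T \<in> bops G" and x: "x \<in> l2 G" and y: "y \<in> l2 G"
  shows "((\<lambda>F. l2_inner G (T (l2_restrict F x)) y) \<longlongrightarrow> l2_inner G (T x) y)
    (finite_subsets_at_top (carrier G))"
proof -
  obtain K where K: "K > 0" "\<And>x. x \<in> l2 G \<Longrightarrow> l2_sqnorm G (T x) \<le> K * l2_sqnorm G x"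
    using bops_bound[OF T] by blast
  let ?tail = "\<lambda>F. l2_sqnorm G x - (\<Sum>g\<in>F. (cmod (x g))\<^sup>2)"
  have "norm (l2_inner G (T x) y - l2_inner G (T (l2_restrict F x)) y)
      \<le> norm (sqrt (K * ?tail F)) * sqrt (l2_sqnorm G y)" if F: "finite F" "F \<subseteq> carrier G" for F
    using l2_inner_bops_le[OF T K(2) l2_restrict_in_l2[OF x] y, of "- F"] K(1)
      l2_sqnorm_nonneg[of G "l2_restrict (- F) x"]
    by (simp add: l2_inner_bops_restrict_compl[OF T x y] l2_sqnorm_restrict_compl[OF x F])
  then have bound: "\<forall>\<^sub>F F in finite_subsets_at_top (carrier G).
      norm (l2_inner G (T x) y - l2_inner G (T (l2_restrict F x)) y) \<le> norm (sqrt (K * ?tail F)) * sqrt (l2_sqnorm G y)"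
    by (rule eventually_finite_subsets_at_top_weakI)
  have "((\<lambda>F. \<Sum>g\<in>F. (cmod (x g))\<^sup>2) \<longlongrightarrow> l2_sqnorm G x) (finite_subsets_at_top (carrier G))"
    unfolding l2_sqnorm_def by (rule infsum_tendsto[OF l2_summable[OF x]])
  then have "((\<lambda>F. sqrt (K * ?tail F)) \<longlongrightarrow> sqrt (K * (l2_sqnorm G x - l2_sqnorm G x)))
      (finite_subsets_at_top (carrier G))"
    by (intro tendsto_intros)
  then have "((\<lambda>F. l2_inner G (T x) y - l2_inner G (T (l2_restrict F x)) y) \<longlongrightarrow> 0)
      (finite_subsets_at_top (carrier G))"
    by (intro tendsto_0_le[OF _ bound]) simp
  then have "((\<lambda>F. l2_inner G (T x) y - (l2_inner G (T x) y - l2_inner G (T (l2_restrict F x)) y)) \<longlongrightarrow>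
      l2_inner G (T x) y - 0) (finite_subsets_at_top (carrier G))"
    by (intro tendsto_intros)
  then show ?thesis by simp
qed

definition op_lincomb :: "('a, 'b) monoid_scheme \<Rightarrow> complex \<Rightarrow> (('a \<Rightarrow> complex) \<Rightarrow> ('a \<Rightarrow> complex)) \<Rightarrow>
    complex \<Rightarrow> (('a \<Rightarrow> complex) \<Rightarrow> ('a \<Rightarrow> complex)) \<Rightarrow> ('a \<Rightarrow> complex) \<Rightarrow> ('a \<Rightarrow> complex)" where
  "op_lincomb G a A b B x = (if x \<in> l2 G then (\<lambda>h. a * A x h + b * B x h) else (\<lambda>_. 0))"

lemma op_lincomb_bops:
  assumes A: "A \<in> bops G" and B: "B \<in> bops G"
  shows "op_lincomb G a A b B \<in> bops G"
proof -
  obtain KA where KA: "KA > 0" "\<And>x. x \<in> l2 G \<Longrightarrow> l2_sqnorm G (A x) \<le> KA * l2_sqnorm G x"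
    using bops_bound[OF A] by blast
  obtain KB where KB: "KB > 0" "\<And>x. x \<in> l2 G \<Longrightarrow> l2_sqnorm G (B x) \<le> KB * l2_sqnorm G x"
    using bops_bound[OF B] by blast
  show ?thesis
  proof (rule bopsI[where K = "2 * (cmod a)\<^sup>2 * KA + 2 * (cmod b)\<^sup>2 * KB"])
    fix x assume x: "x \<in> l2 G"
    show "op_lincomb G a A b B x \<in> l2 G"
      using x by (simp add: op_lincomb_def l2_lincomb bops_l2[OF A] bops_l2[OF B])
    have "l2_sqnorm G (op_lincomb G a A b B x) \<le> 2 * (cmod a)\<^sup>2 * l2_sqnorm G (A x) + 2 * (cmod b)\<^sup>2 * l2_sqnorm G (B x)"
      using x by (simp add: op_lincomb_def l2_sqnorm_lincomb_le bops_l2[OF A] bops_l2[OF B])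
    also have "\<dots> \<le> 2 * (cmod a)\<^sup>2 * (KA * l2_sqnorm G x) + 2 * (cmod b)\<^sup>2 * (KB * l2_sqnorm G x)"
      using KA(2)[OF x] KB(2)[OF x] by (intro add_mono mult_left_mono) auto
    finally show "l2_sqnorm G (op_lincomb G a A b B x) \<le> (2 * (cmod a)\<^sup>2 * KA + 2 * (cmod b)\<^sup>2 * KB) * l2_sqnorm G x"
      by (simp add: algebra_simps)
  next
    fix x y :: "'a \<Rightarrow> complex" and c d assume x: "x \<in> l2 G" and y: "y \<in> l2 G"
    then show "op_lincomb G a A b B (\<lambda>g. c * x g + d * y g) = (\<lambda>g. c * op_lincomb G a A b B x g + d * op_lincomb G a A b B y g)"
      by (simp add: op_lincomb_def l2_lincomb bops_linear[OF A] bops_linear[OF B] algebra_simps)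
  qed (simp add: op_lincomb_def)
qed

definition proj_on :: "('a, 'b) monoid_scheme \<Rightarrow> 'a set \<Rightarrow> ('a \<Rightarrow> complex) \<Rightarrow> ('a \<Rightarrow> complex)" where
  "proj_on G S x = (if x \<in> l2 G then l2_restrict S x else (\<lambda>_. 0))"

lemma proj_on_bops: "proj_on G S \<in> bops G"
proof (rule bopsI[where K = 1])
  fix x assume x: "x \<in> l2 G"
  have "l2_sqnorm G (l2_restrict S x) \<le> l2_sqnorm G x"
    unfolding l2_sqnorm_def[of G x]
    by (rule l2_dominated(2)[OF _ l2_summable[OF x]]) (auto simp: l2_restrict_def l2_vanishes_outside[OF x])
  then show "proj_on G S x \<in> l2 G" "l2_sqnorm G (proj_on G S x) \<le> 1 * l2_sqnorm G x"
    using x by (simp_all add: proj_on_def l2_restrict_in_l2)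
qed (auto simp: proj_on_def l2_restrict_def l2_lincomb)

section \<open>Adjoints, commutants and von Neumann algebras\<close>

lemma le_mult_of_le_sqrt_mult:
  fixes s K N :: real
  assumes "0 \<le> s" "0 \<le> K" "0 \<le> N" "s \<le> sqrt (K * s) * sqrt N"
  shows "s \<le> K * N"
proof (cases "s = 0")
  case False
  have "s * s \<le> (sqrt (K * s) * sqrt N)\<^sup>2"
    using power_mono[OF assms(4) assms(1), of 2] by (simp add: power2_eq_square)
  also have "\<dots> = (K * N) * s" using assms(1-3) by (simp add: power_mult_distrib)
  finally show ?thesis using False assms(1) by (simp add: mult_le_cancel_right)
qed (use assms in simp)

definition adjoint_op :: "('a, 'b) monoid_scheme \<Rightarrow> (('a \<Rightarrow> complex) \<Rightarrow> ('a \<Rightarrow> complex)) \<Rightarrow> ('a \<Rightarrow> complex) \<Rightarrow> ('a \<Rightarrow> complex)" where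
  "adjoint_op G T = (\<lambda>y. if y \<in> l2 G then (\<lambda>g. if g \<in> carrier G then l2_inner G (T (l2_basis g)) y else 0)
                        else (\<lambda>_. 0))"

lemma sum_square_adjoint_coeffs_le:
  assumes T: "T \<in> bops G" and K: "K > 0" "\<And>x. x \<in> l2 G \<Longrightarrow> l2_sqnorm G (T x) \<le> K * l2_sqnorm G x"
    and y: "y \<in> l2 G" and F: "finite F" "F \<subseteq> carrier G"
  shows "(\<Sum>g\<in>F. (cmod (l2_inner G (T (l2_basis g)) y))\<^sup>2) \<le> K * l2_sqnorm G y"
proof -
  define a where "a g = l2_inner G (T (l2_basis g)) y" for g
  define s where "s = (\<Sum>g\<in>F. (cmod (a g))\<^sup>2)"
  have x: "l2_restrict F a \<in> l2 G" by (rule l2_restrict_finite_in_l2[OF F])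
  have "l2_sqnorm G (l2_restrict F a) = s"
    unfolding l2_sqnorm_def s_def by (rule infsumI[OF has_sum_sqnorm_restrict_finite[OF F]])
  moreover have "l2_inner G (T (l2_restrict F a)) y = of_real s"
    unfolding l2_inner_bops_restrict_finite[OF T F y] s_def of_real_sum
    by (rule sum.cong[OF refl], subst complex_norm_square) (simp add: a_def mult.commute)
  moreover have "0 \<le> s" by (simp add: s_def sum_nonneg)
  ultimately have "s \<le> sqrt (K * s) * sqrt (l2_sqnorm G y)"
    using l2_inner_bops_le[OF T K(2) x y] by simp
  then have "s \<le> K * l2_sqnorm G y"
    by (meson K(1) less_imp_le le_mult_of_le_sqrt_mult \<open>0 \<le> s\<close> l2_sqnorm_nonneg)
  then show ?thesis by (simp add: s_def a_def)
qed

lemma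
  assumes T: "T \<in> bops G" and K: "K > 0" "\<And>x. x \<in> l2 G \<Longrightarrow> l2_sqnorm G (T x) \<le> K * l2_sqnorm G x"
    and y: "y \<in> l2 G"
  shows adjoint_op_in_l2: "adjoint_op G T y \<in> l2 G"
    and l2_sqnorm_adjoint_op_le: "l2_sqnorm G (adjoint_op G T y) \<le> K * l2_sqnorm G y"
proof -
  have partial: "(\<Sum>g\<in>F. (cmod (adjoint_op G T y g))\<^sup>2) \<le> K * l2_sqnorm G y"
    if "finite F" "F \<subseteq> carrier G" for F
    using sum_square_adjoint_coeffs_le[OF T K y that] that(2)
    by (simp add: adjoint_op_def y subset_iff cong: sum.cong)
  have sm: "(\<lambda>g. (cmod (adjoint_op G T y g))\<^sup>2) summable_on carrier G"
    by (rule nonneg_bdd_above_summable_on) (auto intro!: bdd_aboveI2 partial)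
  then show "adjoint_op G T y \<in> l2 G" by (simp add: l2_def adjoint_op_def y)
  show "l2_sqnorm G (adjoint_op G T y) \<le> K * l2_sqnorm G y"
    unfolding l2_sqnorm_def[of G "adjoint_op G T y"] by (rule infsum_le_finite_sums[OF sm partial])
qed

lemma l2_inner_adjoint_op:
  assumes T: "T \<in> bops G" and x: "x \<in> l2 G" and y: "y \<in> l2 G"
  shows "l2_inner G (T x) y = l2_inner G x (adjoint_op G T y)"
proof -
  obtain K where K: "K > 0" "\<And>x. x \<in> l2 G \<Longrightarrow> l2_sqnorm G (T x) \<le> K * l2_sqnorm G x"
    using bops_bound[OF T] by blast
  let ?b = "adjoint_op G T y"
  have "((\<lambda>F. \<Sum>g\<in>F. cnj (x g) * ?b g) \<longlongrightarrow> l2_inner G x ?b) (finite_subsets_at_top (carrier G))"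
    using l2_inner_has_sum[OF x adjoint_op_in_l2[OF T K y]] by (simp add: has_sum_def)
  moreover have "((\<lambda>F. \<Sum>g\<in>F. cnj (x g) * ?b g) \<longlongrightarrow> l2_inner G (T x) y) (finite_subsets_at_top (carrier G))"
  proof (rule Lim_transform_eventually[OF tendsto_l2_inner_bops_restrict[OF T x y]])
    show "\<forall>\<^sub>F F in finite_subsets_at_top (carrier G). l2_inner G (T (l2_restrict F x)) y = (\<Sum>g\<in>F. cnj (x g) * ?b g)"
    proof (rule eventually_finite_subsets_at_top_weakI)
      fix F assume F: "finite F" "F \<subseteq> carrier G"
      then show "l2_inner G (T (l2_restrict F x)) y = (\<Sum>g\<in>F. cnj (x g) * ?b g)"
        unfolding l2_inner_bops_restrict_finite[OF T F y]
        by (intro sum.cong) (auto simp: adjoint_op_def y)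
    qed
  qed
  ultimately show ?thesis
    using tendsto_unique[OF finite_subsets_at_top_neq_bot] by metis
qed

lemma adjoint_op_bops:
  assumes T: "T \<in> bops G"
  shows "adjoint_op G T \<in> bops G"
proof -
  obtain K where K: "K > 0" "\<And>x. x \<in> l2 G \<Longrightarrow> l2_sqnorm G (T x) \<le> K * l2_sqnorm G x"
    using bops_bound[OF T] by blast
  show ?thesis
  proof (rule bopsI[where K = K])
    fix y assume "y \<in> l2 G"
    then show "adjoint_op G T y \<in> l2 G" "l2_sqnorm G (adjoint_op G T y) \<le> K * l2_sqnorm G y"
      by (simp_all add: adjoint_op_in_l2[OF T K] l2_sqnorm_adjoint_op_le[OF T K])
  next
    fix y z a b assume y: "y \<in> l2 G" and z: "z \<in> l2 G"
    have "T (l2_basis g) \<in> l2 G" if "g \<in> carrier G" for g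
      by (rule bops_l2[OF T l2_basis_in_l2[OF that]])
    then show "adjoint_op G T (\<lambda>g. a * y g + b * z g) = (\<lambda>g. a * adjoint_op G T y g + b * adjoint_op G T z g)"
      using y z l2_lincomb[OF y z] by (auto simp: adjoint_op_def l2_inner_lincomb_right)
  qed (simp add: adjoint_op_def)
qed

definition is_adjoint :: "('a, 'b) monoid_scheme \<Rightarrow> (('a \<Rightarrow> complex) \<Rightarrow> ('a \<Rightarrow> complex)) \<Rightarrow> (('a \<Rightarrow> complex) \<Rightarrow> ('a \<Rightarrow> complex)) \<Rightarrow> bool" where
  "is_adjoint G T S \<longleftrightarrow> (\<forall>x\<in>l2 G. \<forall>y\<in>l2 G. l2_inner G (T x) y = l2_inner G x (S y))"

lemma star_closed_iff_is_adjoint: "star_closed G M \<longleftrightarrow> (\<forall>T\<in>M. \<exists>S\<in>M. is_adjoint G T S)"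
  unfolding star_closed_def is_adjoint_def ..

lemma is_adjoint_sym: "is_adjoint G T S \<Longrightarrow> is_adjoint G S T"
  unfolding is_adjoint_def by (metis l2_inner_cnj)

lemma is_adjoint_adjoint_op: "T \<in> bops G \<Longrightarrow> is_adjoint G T (adjoint_op G T)"
  unfolding is_adjoint_def by (intro ballI l2_inner_adjoint_op)

lemma is_adjoint_unique:
  assumes "S1 \<in> bops G" "S2 \<in> bops G" "is_adjoint G T S1" "is_adjoint G T S2"
  shows "S1 = S2"
proof (rule bops_eqI[OF assms(1,2)])
  fix y assume y: "y \<in> l2 G"
  show "S1 y = S2 y"
    by (rule l2_eqI[OF bops_l2[OF assms(1) y] bops_l2[OF assms(2) y]])
       (use assms(3,4) y in \<open>auto simp: is_adjoint_def\<close>)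
qed

lemma is_adjoint_comp:
  assumes "B \<in> bops G" "A' \<in> bops G" "is_adjoint G A A'" "is_adjoint G B B'"
  shows "is_adjoint G (A \<circ> B) (B' \<circ> A')"
  using assms bops_l2[OF assms(1)] bops_l2[OF assms(2)] by (simp add: is_adjoint_def)

lemma adjoints_commute:
  assumes "A \<in> bops G" "B \<in> bops G" "A' \<in> bops G" "B' \<in> bops G" "is_adjoint G A A'" "is_adjoint G B B'"
    and "A \<circ> B = B \<circ> A"
  shows "A' \<circ> B' = B' \<circ> A'"
proof -
  have "is_adjoint G (A \<circ> B) (B' \<circ> A')" by (rule is_adjoint_comp[OF assms(2,3,5,6)])
  moreover have "is_adjoint G (A \<circ> B) (A' \<circ> B')"
    using is_adjoint_comp[OF assms(1,4,6,5)] assms(7) by simp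
  ultimately show ?thesis
    using is_adjoint_unique[OF bops_comp[OF assms(4,3)] bops_comp[OF assms(3,4)]] by metis
qed

lemma commutant_bops: "commutant G X \<subseteq> bops G"
  by (auto simp: commutant_def)

lemma commutant_antimono: "X \<subseteq> Y \<Longrightarrow> commutant G Y \<subseteq> commutant G X"
  by (auto simp: commutant_def)

lemma subset_commutant_commutant: "X \<subseteq> bops G \<Longrightarrow> X \<subseteq> commutant G (commutant G X)"
  by (auto simp: commutant_def)

lemma commutant_commutant_commutant:
  "X \<subseteq> bops G \<Longrightarrow> commutant G (commutant G (commutant G X)) = commutant G X"
  by (meson commutant_antimono commutant_bops subset_antisym subset_commutant_commutant)

lemma commutant_commutant_subset:
  assumes "X \<subseteq> bops G" "S \<subseteq> commutant G (commutant G X)"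
  shows "commutant G (commutant G S) \<subseteq> commutant G (commutant G X)"
proof -
  have "commutant G (commutant G (commutant G X)) \<subseteq> commutant G S"
    by (rule commutant_antimono[OF assms(2)])
  then have "commutant G X \<subseteq> commutant G S"
    by (simp add: commutant_commutant_commutant[OF assms(1)])
  then show ?thesis by (rule commutant_antimono)
qed

lemma adjoint_op_in_commutant:
  assumes "S \<subseteq> bops G" "star_closed G S" "A \<in> commutant G S"
  shows "adjoint_op G A \<in> commutant G S"
proof -
  have A: "A \<in> bops G" "\<And>s. s \<in> S \<Longrightarrow> A \<circ> s = s \<circ> A" using assms(3) by (auto simp: commutant_def)
  have "adjoint_op G A \<circ> s = s \<circ> adjoint_op G A" if s: "s \<in> S" for s
  proof -
    obtain s' where s': "s' \<in> S" "is_adjoint G s s'"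
      using assms(2) s by (auto simp: star_closed_iff_is_adjoint)
    show ?thesis
      by (rule adjoints_commute[OF A(1) _ adjoint_op_bops[OF A(1)] _ is_adjoint_adjoint_op[OF A(1)]
            is_adjoint_sym[OF s'(2)]])
         (use assms(1) s s' A(2) in auto)
  qed
  then show ?thesis using adjoint_op_bops[OF A(1)] by (simp add: commutant_def)
qed

lemma star_closed_commutant:
  assumes "S \<subseteq> bops G" "star_closed G S"
  shows "star_closed G (commutant G S)"
  unfolding star_closed_iff_is_adjoint
  using adjoint_op_in_commutant[OF assms] is_adjoint_adjoint_op commutant_bops by blast

lemma von_neumann_algebra_commutant_commutant:
  assumes "S \<subseteq> bops G" "star_closed G S"
  shows "von_neumann_algebra G (commutant G (commutant G S))"
  unfolding von_neumann_algebra_def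
  using commutant_bops star_closed_commutant[OF commutant_bops star_closed_commutant[OF assms]]
    commutant_commutant_commutant[OF commutant_bops] by blast

lemma op_lincomb_in_commutant:
  assumes X: "X \<subseteq> bops G" and A: "A \<in> commutant G X" and B: "B \<in> commutant G X"
  shows "op_lincomb G a A b B \<in> commutant G X"
proof -
  have Ab: "A \<in> bops G" and Bb: "B \<in> bops G" using A B by (auto simp: commutant_def)
  have L: "op_lincomb G a A b B \<in> bops G" by (rule op_lincomb_bops[OF Ab Bb])
  have "op_lincomb G a A b B \<circ> C = C \<circ> op_lincomb G a A b B" if C: "C \<in> X" for C
  proof -
    have Cb: "C \<in> bops G" using C X by blast
    have "A \<circ> C = C \<circ> A" "B \<circ> C = C \<circ> B" using A B C by (auto simp: commutant_def)
    then have comm: "A (C x) = C (A x)" "B (C x) = C (B x)" for x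
      by (metis comp_apply)+
    show ?thesis
    proof (rule bops_eqI[OF bops_comp[OF L Cb] bops_comp[OF Cb L]])
      fix x assume x: "x \<in> l2 G"
      then show "(op_lincomb G a A b B \<circ> C) x = (C \<circ> op_lincomb G a A b B) x"
        using bops_linear[OF Cb bops_l2[OF Ab x] bops_l2[OF Bb x]]
        by (simp add: op_lincomb_def bops_l2[OF Cb] comm)
    qed
  qed
  then show ?thesis using L by (simp add: commutant_def)
qed

lemma comp_in_commutant:
  assumes "A \<in> commutant G X" "B \<in> commutant G X"
  shows "A \<circ> B \<in> commutant G X"
proof -
  have "A \<circ> B \<circ> C = C \<circ> (A \<circ> B)" if "C \<in> X" for C
  proof -
    have "A \<circ> C = C \<circ> A" "B \<circ> C = C \<circ> B" using assms that by (auto simp: commutant_def)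
    then show ?thesis by (metis comp_assoc)
  qed
  moreover have "A \<circ> B \<in> bops G" using assms by (intro bops_comp) (auto simp: commutant_def)
  ultimately show ?thesis by (simp add: commutant_def)
qed

lemma is_adjoint_op_lincomb:
  assumes "A \<in> bops G" "B \<in> bops G" "A' \<in> bops G" "B' \<in> bops G"
    and "is_adjoint G A A'" "is_adjoint G B B'"
  shows "is_adjoint G (op_lincomb G a A b B) (op_lincomb G (cnj a) A' (cnj b) B')"
  unfolding is_adjoint_def
proof (intro ballI)
  fix x y assume x: "x \<in> l2 G" and y: "y \<in> l2 G"
  have "l2_inner G (op_lincomb G a A b B x) y = cnj a * l2_inner G (A x) y + cnj b * l2_inner G (B x) y"
    using x y by (simp add: op_lincomb_def l2_inner_lincomb_left bops_l2 assms(1,2))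
  also have "\<dots> = cnj a * l2_inner G x (A' y) + cnj b * l2_inner G x (B' y)"
    using assms(5,6) x y by (simp add: is_adjoint_def)
  also have "\<dots> = l2_inner G x (op_lincomb G (cnj a) A' (cnj b) B' y)"
    using x y by (simp add: op_lincomb_def l2_inner_lincomb_right bops_l2 assms(3,4))
  finally show "l2_inner G (op_lincomb G a A b B x) y = l2_inner G x (op_lincomb G (cnj a) A' (cnj b) B' y)" .
qed

section \<open>The left regular representation\<close>

context group
begin

lemma bij_betw_inv_mult:
  assumes "g \<in> carrier G"
  shows "bij_betw (\<lambda>h. inv g \<otimes> h) (carrier G) (carrier G)"
  by (rule bij_betw_byWitness[where f' = "\<lambda>h. g \<otimes> h"])
     (use assms in \<open>auto simp: m_assoc[symmetric]\<close>)

lemma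
  assumes g: "g \<in> carrier G" and x: "x \<in> l2 G"
  shows lreg_in_l2: "lreg G g x \<in> l2 G"
    and l2_sqnorm_lreg: "l2_sqnorm G (lreg G g x) = l2_sqnorm G x"
proof -
  have e: "\<And>h. h \<in> carrier G \<Longrightarrow> (cmod (lreg G g x h))\<^sup>2 = (cmod (x (inv g \<otimes> h)))\<^sup>2"
    using x by (simp add: lreg_def)
  have "(\<lambda>h. (cmod (x (inv g \<otimes> h)))\<^sup>2) summable_on carrier G"
    using summable_on_reindex_bij_betw[OF bij_betw_inv_mult[OF g], of "\<lambda>h. (cmod (x h))\<^sup>2"] l2_summable[OF x]
    by simp
  then have "(\<lambda>h. (cmod (lreg G g x h))\<^sup>2) summable_on carrier G"
    by (rule summable_on_cong[THEN iffD1, rotated]) (simp add: e)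
  then show "lreg G g x \<in> l2 G" using x by (simp add: l2_def lreg_def)
  have "l2_sqnorm G (lreg G g x) = (\<Sum>\<^sub>\<infinity>h\<in>carrier G. (cmod (x (inv g \<otimes> h)))\<^sup>2)"
    unfolding l2_sqnorm_def by (rule infsum_cong) (simp add: e)
  also have "\<dots> = l2_sqnorm G x"
    unfolding l2_sqnorm_def by (rule infsum_reindex_bij_betw[OF bij_betw_inv_mult[OF g]])
  finally show "l2_sqnorm G (lreg G g x) = l2_sqnorm G x" .
qed

lemma lreg_bops:
  assumes g: "g \<in> carrier G"
  shows "lreg G g \<in> bops G"
proof (rule bopsI[where K = 1])
  fix x assume x: "x \<in> l2 G"
  show "lreg G g x \<in> l2 G" "l2_sqnorm G (lreg G g x) \<le> 1 * l2_sqnorm G x"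
    by (simp_all add: lreg_in_l2[OF g x] l2_sqnorm_lreg[OF g x])
qed (auto simp: lreg_def l2_lincomb)

lemma lreg_comp:
  assumes g: "g \<in> carrier G" and k: "k \<in> carrier G"
  shows "lreg G g \<circ> lreg G k = lreg G (g \<otimes> k)"
proof (rule bops_eqI[OF bops_comp[OF lreg_bops[OF g] lreg_bops[OF k]] lreg_bops[OF m_closed[OF g k]]])
  fix x assume x: "x \<in> l2 G"
  then show "(lreg G g \<circ> lreg G k) x = lreg G (g \<otimes> k) x"
    using lreg_in_l2[OF k x] g k by (auto simp: lreg_def inv_mult_group m_assoc fun_eq_iff)
qed

lemma lreg_one_apply: "x \<in> l2 G \<Longrightarrow> lreg G \<one> x = x"
  by (auto simp: lreg_def fun_eq_iff l2_vanishes_outside)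

lemma lreg_one_comp: "A \<in> bops G \<Longrightarrow> lreg G \<one> \<circ> A = A"
  by (rule bops_eqI[OF bops_comp[OF lreg_bops]]) (simp_all add: lreg_one_apply bops_l2)

lemma comp_lreg_one: "A \<in> bops G \<Longrightarrow> A \<circ> lreg G \<one> = A"
  by (rule bops_eqI[OF bops_comp[OF _ lreg_bops]]) (simp_all add: lreg_one_apply)

lemma is_adjoint_lreg:
  assumes g: "g \<in> carrier G"
  shows "is_adjoint G (lreg G g) (lreg G (inv g))"
  unfolding is_adjoint_def
proof (intro ballI)
  fix x y assume x: "x \<in> l2 G" and y: "y \<in> l2 G"
  have "l2_inner G (lreg G g x) y = (\<Sum>\<^sub>\<infinity>h\<in>carrier G. cnj (x (inv g \<otimes> h)) * y h)"
    unfolding l2_inner_def by (rule infsum_cong) (simp add: lreg_def x)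
  also have "\<dots> = (\<Sum>\<^sub>\<infinity>h\<in>carrier G. cnj (x (inv g \<otimes> (g \<otimes> h))) * y (g \<otimes> h))"
    using infsum_reindex_bij_betw[OF bij_betw_inv_mult[OF inv_closed[OF g]], of "\<lambda>h. cnj (x (inv g \<otimes> h)) * y h"] g
    by simp
  also have "\<dots> = (\<Sum>\<^sub>\<infinity>h\<in>carrier G. cnj (x h) * y (g \<otimes> h))"
    by (rule infsum_cong) (simp add: g m_assoc[symmetric])
  also have "\<dots> = l2_inner G x (lreg G (inv g) y)"
    unfolding l2_inner_def by (rule infsum_cong) (simp add: lreg_def y g)
  finally show "l2_inner G (lreg G g x) y = l2_inner G x (lreg G (inv g) y)" .
qed

lemma lreg_conj_lreg:
  assumes "g \<in> carrier G" "h \<in> carrier G"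
  shows "lreg G g \<circ> lreg G h \<circ> lreg G (inv g) = lreg G (g \<otimes> h \<otimes> inv g)"
  using assms by (simp add: lreg_comp)

lemma lreg_conj_comp:
  assumes g: "g \<in> carrier G" and B: "B \<in> bops G"
  shows "lreg G g \<circ> (A \<circ> B) \<circ> lreg G (inv g) = (lreg G g \<circ> A \<circ> lreg G (inv g)) \<circ> (lreg G g \<circ> B \<circ> lreg G (inv g))"
proof -
  have "lreg G (inv g) \<circ> (lreg G g \<circ> B) = B"
    using lreg_comp[OF inv_closed[OF g] g] g by (simp add: comp_assoc[symmetric] lreg_one_comp[OF B])
  then have "lreg G (inv g) \<circ> (lreg G g \<circ> (B \<circ> lreg G (inv g))) = B \<circ> lreg G (inv g)"
    by (metis comp_assoc)
  then show ?thesis by (simp add: comp_assoc)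
qed

lemma lreg_conj_op_lincomb:
  assumes g: "g \<in> carrier G" and A: "A \<in> bops G" and B: "B \<in> bops G"
  shows "lreg G g \<circ> op_lincomb G a A b B \<circ> lreg G (inv g)
    = op_lincomb G a (lreg G g \<circ> A \<circ> lreg G (inv g)) b (lreg G g \<circ> B \<circ> lreg G (inv g))"
proof (rule bops_eqI)
  fix x assume x: "x \<in> l2 G"
  have y: "lreg G (inv g) x \<in> l2 G" by (rule lreg_in_l2[OF inv_closed[OF g] x])
  show "(lreg G g \<circ> op_lincomb G a A b B \<circ> lreg G (inv g)) x
    = op_lincomb G a (lreg G g \<circ> A \<circ> lreg G (inv g)) b (lreg G g \<circ> B \<circ> lreg G (inv g)) x"
    using x y bops_linear[OF lreg_bops[OF g] bops_l2[OF A y] bops_l2[OF B y]]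
    by (simp add: op_lincomb_def)
qed (intro bops_comp op_lincomb_bops lreg_bops g inv_closed A B)+


lemma lreg_comm_proj_on:
  assumes N: "subgroup N G" and n: "n \<in> N"
  shows "lreg G n \<circ> proj_on G N = proj_on G N \<circ> lreg G n"
proof -
  have nc: "n \<in> carrier G" by (rule subgroup.mem_carrier[OF N n])
  have coset: "inv n \<otimes> h \<in> N \<longleftrightarrow> h \<in> N" if h: "h \<in> carrier G" for h
  proof
    assume "inv n \<otimes> h \<in> N"
    then have "n \<otimes> (inv n \<otimes> h) \<in> N" by (rule subgroup.m_closed[OF N n])
    then show "h \<in> N" using h nc by (simp add: m_assoc[symmetric])
  qed (rule subgroup.m_closed[OF N subgroup.m_inv_closed[OF N n]])
  show ?thesis
  proof (rule bops_eqI[OF bops_comp bops_comp])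
    fix x assume x: "x \<in> l2 G"
    then show "(lreg G n \<circ> proj_on G N) x = (proj_on G N \<circ> lreg G n) x"
      using coset subgroup.subset[OF N] bops_l2[OF proj_on_bops x] lreg_in_l2[OF nc x]
      by (auto simp: proj_on_def l2_restrict_def lreg_def fun_eq_iff)
  qed (simp_all add: lreg_bops[OF nc] proj_on_bops)
qed

lemma proj_on_in_commutant: "subgroup N G \<Longrightarrow> proj_on G N \<in> commutant G (lreg G ` N)"
  using lreg_comm_proj_on proj_on_bops by (auto simp: commutant_def)

lemma lreg_in_group_vN:
  assumes "subgroup N G" "n \<in> N"
  shows "lreg G n \<in> group_vN G N"
proof -
  have "lreg G ` N \<subseteq> bops G" using lreg_bops subgroup.mem_carrier[OF assms(1)] by blast
  then show ?thesis
    unfolding group_vN_def using subset_commutant_commutant assms(2) by blast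
qed

lemma group_vN_basis_support:
  assumes N: "subgroup N G" and T: "T \<in> group_vN G N" and nz: "T (l2_basis \<one>) h \<noteq> 0"
  shows "h \<in> N"
proof -
  have "T \<circ> proj_on G N = proj_on G N \<circ> T"
    using T proj_on_in_commutant[OF N] by (auto simp: group_vN_def commutant_def)
  moreover have "proj_on G N (l2_basis \<one>) = l2_basis \<one>"
    using subgroup.one_closed[OF N] l2_basis_in_l2[OF one_closed]
    by (auto simp: proj_on_def l2_restrict_def l2_basis_def)
  ultimately have "T (l2_basis \<one>) = proj_on G N (T (l2_basis \<one>))"
    by (metis comp_apply)
  then show ?thesis
    using nz by (auto simp: proj_on_def l2_restrict_def fun_eq_iff split: if_splits)
qed

lemma lreg_conj_in_commutant:
  assumes S: "S \<subseteq> bops G" and g: "g \<in> carrier G"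
    and conj: "\<And>s. s \<in> S \<Longrightarrow> lreg G g \<circ> s \<circ> lreg G (inv g) \<in> S"
    and A: "A \<in> commutant G S"
  shows "lreg G (inv g) \<circ> A \<circ> lreg G g \<in> commutant G S"
proof -
  let ?V = "lreg G g" and ?V' = "lreg G (inv g)"
  have inverse: "?V' \<circ> ?V = lreg G \<one>"
    using lreg_comp[OF inv_closed[OF g] g] g by simp
  have Ab: "A \<in> bops G" and Acomm: "\<And>s. s \<in> S \<Longrightarrow> A \<circ> s = s \<circ> A"
    using A by (auto simp: commutant_def)
  have "(?V' \<circ> A \<circ> ?V) \<circ> s = s \<circ> (?V' \<circ> A \<circ> ?V)" if s: "s \<in> S" for s
  proof -
    have "?V' \<circ> A \<circ> ?V \<circ> s = ?V' \<circ> A \<circ> (?V \<circ> s \<circ> ?V') \<circ> ?V"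
      using comp_lreg_one S s by (simp add: comp_assoc inverse subset_iff)
    also have "\<dots> = (?V' \<circ> ?V) \<circ> s \<circ> (?V' \<circ> A \<circ> ?V)"
      using Acomm[OF conj[OF s]] by (simp add: comp_assoc)
    finally show ?thesis using lreg_one_comp S s by (simp add: inverse subset_iff)
  qed
  moreover have "?V' \<circ> A \<circ> ?V \<in> bops G"
    by (intro bops_comp lreg_bops Ab g inv_closed)
  ultimately show ?thesis by (simp add: commutant_def)
qed

lemma lreg_conj_in_commutant_commutant:
  assumes S: "S \<subseteq> bops G" and g: "g \<in> carrier G"
    and conj: "\<And>s. s \<in> S \<Longrightarrow> lreg G g \<circ> s \<circ> lreg G (inv g) \<in> S"
    and T: "T \<in> commutant G (commutant G S)"
  shows "lreg G g \<circ> T \<circ> lreg G (inv g) \<in> commutant G (commutant G S)"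
proof -
  let ?V = "lreg G g" and ?V' = "lreg G (inv g)"
  have inverse: "?V \<circ> ?V' = lreg G \<one>"
    using lreg_comp[OF g inv_closed[OF g]] g by simp
  have "(?V \<circ> T \<circ> ?V') \<circ> A = A \<circ> (?V \<circ> T \<circ> ?V')" if A: "A \<in> commutant G S" for A
  proof -
    have Ab: "A \<in> bops G" using A by (simp add: commutant_def)
    have comm: "T \<circ> (?V' \<circ> A \<circ> ?V) = (?V' \<circ> A \<circ> ?V) \<circ> T"
      using T lreg_conj_in_commutant[OF S g conj A] by (simp add: commutant_def)
    have "?V \<circ> T \<circ> ?V' \<circ> A = ?V \<circ> (T \<circ> (?V' \<circ> A \<circ> ?V)) \<circ> ?V'"
      by (simp add: comp_assoc inverse comp_lreg_one[OF Ab])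
    also have "\<dots> = ?V \<circ> ((?V' \<circ> A \<circ> ?V) \<circ> T) \<circ> ?V'"
      by (simp only: comm)
    also have "\<dots> = (?V \<circ> ?V') \<circ> A \<circ> (?V \<circ> T \<circ> ?V')"
      by (simp only: comp_assoc)
    finally show ?thesis by (simp add: inverse lreg_one_comp[OF Ab])
  qed
  moreover have "?V \<circ> T \<circ> ?V' \<in> bops G"
    using T commutant_bops by (intro bops_comp lreg_bops g inv_closed) blast
  ultimately show ?thesis by (simp add: commutant_def)
qed

lemma G_invariant_commutant_commutant:
  assumes "S \<subseteq> bops G" "\<And>g s. g \<in> carrier G \<Longrightarrow> s \<in> S \<Longrightarrow> lreg G g \<circ> s \<circ> lreg G (inv g) \<in> S"
  shows "G_invariant G (commutant G (commutant G S))"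
  unfolding G_invariant_def using lreg_conj_in_commutant_commutant[OF assms(1)] assms(2) by blast

end

section \<open>The lamplighter group\<close>

lemma lamplighter_carrier: "carrier lamplighter = {(f, n). finite {k. f k}}"
  by (simp add: lamplighter_def)

lemma lamplighter_mult: "(f, n) \<otimes>\<^bsub>lamplighter\<^esub> (g, m) = (\<lambda>k. f k \<noteq> g (k - n), n + m)"
  by (simp add: lamplighter_def)

lemma lamplighter_one: "\<one>\<^bsub>lamplighter\<^esub> = (\<lambda>_. False, 0)"
  by (simp add: lamplighter_def)

lemma finite_shift:
  fixes f :: "int \<Rightarrow> bool"
  assumes "finite {k. f k}"
  shows "finite {k. f (k + n)}"
proof -
  have "{k. f (k + n)} = (\<lambda>j. j - n) ` {j. f j}"
    by (auto simp: image_iff) (metis add_diff_cancel)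
  then show ?thesis using assms by simp
qed

lemma finite_xor_shift:
  fixes f g :: "int \<Rightarrow> bool"
  assumes "finite {k. f k}" "finite {k. g k}"
  shows "finite {k. f k \<noteq> g (k - n)}"
proof -
  have "{k. f k \<noteq> g (k - n)} \<subseteq> {k. f k} \<union> {k. g (k + - n)}" by auto
  then show ?thesis using assms finite_shift[of g "- n"] finite_subset by blast
qed

lemma group_lamplighter: "group lamplighter"
proof (rule groupI)
  fix x y assume "x \<in> carrier lamplighter" "y \<in> carrier lamplighter"
  then show "x \<otimes>\<^bsub>lamplighter\<^esub> y \<in> carrier lamplighter"
    by (cases x, cases y) (auto simp: lamplighter_carrier lamplighter_mult intro: finite_xor_shift[simplified])
next
  fix x y z
  show "x \<otimes>\<^bsub>lamplighter\<^esub> y \<otimes>\<^bsub>lamplighter\<^esub> z = x \<otimes>\<^bsub>lamplighter\<^esub> (y \<otimes>\<^bsub>lamplighter\<^esub> z)"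
    by (cases x, cases y, cases z) (auto simp: lamplighter_mult algebra_simps)
next
  fix x assume x: "x \<in> carrier lamplighter"
  obtain f n where xe: "x = (f, n)" by (cases x)
  have "(\<lambda>k. f (k + n), - n) \<in> carrier lamplighter"
    using x xe by (auto simp: lamplighter_carrier intro: finite_shift)
  moreover have "(\<lambda>k. f (k + n), - n) \<otimes>\<^bsub>lamplighter\<^esub> x = \<one>\<^bsub>lamplighter\<^esub>"
    by (simp add: xe lamplighter_mult lamplighter_one)
  ultimately show "\<exists>y\<in>carrier lamplighter. y \<otimes>\<^bsub>lamplighter\<^esub> x = \<one>\<^bsub>lamplighter\<^esub>" by blast
qed (auto simp: lamplighter_carrier lamplighter_one lamplighter_mult)

interpretation lamplighter: group lamplighter
  by (rule group_lamplighter)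

lemma lamplighter_inv:
  assumes "(f, n) \<in> carrier lamplighter"
  shows "inv\<^bsub>lamplighter\<^esub> (f, n) = (\<lambda>k. f (k + n), - n)"
proof (rule lamplighter.inv_equality)
  show "(\<lambda>k. f (k + n), - n) \<otimes>\<^bsub>lamplighter\<^esub> (f, n) = \<one>\<^bsub>lamplighter\<^esub>"
    by (simp add: lamplighter_mult lamplighter_one)
  show "(\<lambda>k. f (k + n), - n) \<in> carrier lamplighter"
    using assms by (auto simp: lamplighter_carrier intro: finite_shift)
qed (use assms in auto)

definition toggle :: "int \<Rightarrow> (int \<Rightarrow> bool) \<Rightarrow> int \<Rightarrow> bool" where
  "toggle i f = f(i := \<not> f i)"

definition lamp :: "int \<Rightarrow> (int \<Rightarrow> bool) \<times> int" where
  "lamp i = ((\<lambda>k. k = i), 0)"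

lemma toggle_commute: "toggle i (toggle k f) = toggle k (toggle i f)"
  by (auto simp: toggle_def fun_eq_iff)

lemma toggle_apply_other: "k \<noteq> i \<Longrightarrow> toggle i f k = f k"
  by (simp add: toggle_def)

lemma toggle_in_carrier: "(toggle i f, m) \<in> carrier lamplighter \<longleftrightarrow> (f, m) \<in> carrier lamplighter"
proof -
  have "{k. toggle i f k} \<subseteq> insert i {k. f k}" "{k. f k} \<subseteq> insert i {k. toggle i f k}"
    by (auto simp: toggle_def)
  then show ?thesis unfolding lamplighter_carrier using finite_subset by auto
qed

lemma lamp_in_carrier: "lamp i \<in> carrier lamplighter"
  by (simp add: lamp_def lamplighter_carrier)

lemma lamp_mult: "lamp i \<otimes>\<^bsub>lamplighter\<^esub> (f, m) = (toggle i f, m)"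
  by (auto simp: lamp_def lamplighter_mult toggle_def fun_eq_iff)

lemma inv_lamp: "inv\<^bsub>lamplighter\<^esub> lamp i = lamp i"
  by (simp add: lamp_def lamplighter_inv lamplighter_carrier)

lemma lamplighter_conj_lamp:
  assumes "(f, n) \<in> carrier lamplighter"
  shows "(f, n) \<otimes>\<^bsub>lamplighter\<^esub> lamp i \<otimes>\<^bsub>lamplighter\<^esub> inv\<^bsub>lamplighter\<^esub> (f, n) = lamp (i + n)"
  using assms by (auto simp: lamp_def lamplighter_mult lamplighter_inv fun_eq_iff)

lemma lreg_lamp_apply:
  assumes "x \<in> l2 lamplighter"
  shows "lreg lamplighter (lamp i) x (f, m) = (if (f, m) \<in> carrier lamplighter then x (toggle i f, m) else 0)"
  using assms by (simp add: lreg_def inv_lamp lamp_mult)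

lemma lreg_in_L_lamplighter:
  "g \<in> carrier lamplighter \<Longrightarrow> lreg lamplighter g \<in> group_vN lamplighter (carrier lamplighter)"
  by (rule lamplighter.lreg_in_group_vN[OF lamplighter.subgroup_self])

section \<open>The lamp projections\<close>

text \<open>\<open>(1 + s u(e(i)))/2\<close> is the spectral projection of \<open>u(e(i))\<close> for the eigenvalue
  \<open>s = \<plusminus>1\<close>; thus \<open>E(i) = lamp_eigenproj (-1) i\<close>.\<close>

definition lamp_eigenproj :: "complex \<Rightarrow> int \<Rightarrow> ((int \<Rightarrow> bool) \<times> int \<Rightarrow> complex) \<Rightarrow> (int \<Rightarrow> bool) \<times> int \<Rightarrow> complex" where
  "lamp_eigenproj s i =
     op_lincomb lamplighter (1 / 2) (lreg lamplighter \<one>\<^bsub>lamplighter\<^esub>) (s / 2) (lreg lamplighter (lamp i))"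

lemma lamp_eigenproj_bops: "lamp_eigenproj s i \<in> bops lamplighter"
  unfolding lamp_eigenproj_def
  by (intro op_lincomb_bops lamplighter.lreg_bops lamp_in_carrier lamplighter.one_closed)

lemma lamp_eigenproj_apply:
  assumes "x \<in> l2 lamplighter"
  shows "lamp_eigenproj s i x (f, m) =
    (if (f, m) \<in> carrier lamplighter then (x (f, m) + s * x (toggle i f, m)) / 2 else 0)"
  using assms l2_vanishes_outside[OF assms, of "(f, m)"]
  by (simp add: lamp_eigenproj_def op_lincomb_def lamplighter.lreg_one_apply lreg_lamp_apply add_divide_distrib)

lemma lamp_eigenproj_in_L_lamplighter: "lamp_eigenproj s i \<in> group_vN lamplighter (carrier lamplighter)"
  unfolding lamp_eigenproj_def group_vN_def
  by (rule op_lincomb_in_commutant[OF commutant_bops])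
     (simp_all add: lreg_in_L_lamplighter[unfolded group_vN_def] lamp_in_carrier)

lemma is_adjoint_lamp_eigenproj:
  "is_adjoint lamplighter (lamp_eigenproj s i) (lamp_eigenproj (cnj s) i)"
proof -
  let ?one = "\<one>\<^bsub>lamplighter\<^esub>"
  have "is_adjoint lamplighter (lreg lamplighter ?one) (lreg lamplighter ?one)"
    "is_adjoint lamplighter (lreg lamplighter (lamp i)) (lreg lamplighter (lamp i))"
    using lamplighter.is_adjoint_lreg[of ?one] lamplighter.is_adjoint_lreg[OF lamp_in_carrier, of i]
    by (simp_all add: inv_lamp)
  then have "is_adjoint lamplighter (lamp_eigenproj s i)
      (op_lincomb lamplighter (cnj (1 / 2)) (lreg lamplighter ?one) (cnj (s / 2)) (lreg lamplighter (lamp i)))"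
    unfolding lamp_eigenproj_def by (intro is_adjoint_op_lincomb lamplighter.lreg_bops lamplighter.one_closed lamp_in_carrier)
  then show ?thesis by (simp add: lamp_eigenproj_def)
qed

lemma lamp_eigenproj_commute: "lamp_eigenproj s i \<circ> lamp_eigenproj t k = lamp_eigenproj t k \<circ> lamp_eigenproj s i"
proof (rule bops_eqI)
  fix x assume x: "x \<in> l2 lamplighter"
  show "(lamp_eigenproj s i \<circ> lamp_eigenproj t k) x = (lamp_eigenproj t k \<circ> lamp_eigenproj s i) x"
  proof
    fix h show "(lamp_eigenproj s i \<circ> lamp_eigenproj t k) x h = (lamp_eigenproj t k \<circ> lamp_eigenproj s i) x h"
      using x bops_l2[OF lamp_eigenproj_bops x]
      by (cases h) (simp add: lamp_eigenproj_apply toggle_in_carrier toggle_commute[of k i] field_simps)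
  qed
qed (intro bops_comp lamp_eigenproj_bops)+

lemma lamp_eigenproj_conj:
  assumes g: "(f, n) \<in> carrier lamplighter"
  shows "lreg lamplighter (f, n) \<circ> lamp_eigenproj s i \<circ> lreg lamplighter (inv\<^bsub>lamplighter\<^esub> (f, n))
    = lamp_eigenproj s (i + n)"
  unfolding lamp_eigenproj_def
  using g by (simp add: lamplighter.lreg_conj_op_lincomb lamplighter.lreg_bops lamp_in_carrier
      lamplighter.lreg_conj_lreg lamplighter_conj_lamp)

definition lamp_proj :: "int \<Rightarrow> ((int \<Rightarrow> bool) \<times> int \<Rightarrow> complex) \<Rightarrow> (int \<Rightarrow> bool) \<times> int \<Rightarrow> complex" where
  "lamp_proj j = lamp_eigenproj (- 1) j \<circ> lamp_eigenproj (- 1) (j + 1)"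

definition lamp_proj_fibre :: "int \<Rightarrow> ((int \<Rightarrow> bool) \<Rightarrow> complex) \<Rightarrow> (int \<Rightarrow> bool) \<Rightarrow> complex" where
  "lamp_proj_fibre j X f = (X f - X (toggle j f) - X (toggle (j + 1) f) + X (toggle j (toggle (j + 1) f))) / 4"

lemma lamp_proj_bops: "lamp_proj j \<in> bops lamplighter"
  unfolding lamp_proj_def by (intro bops_comp lamp_eigenproj_bops)

lemma lamp_proj_in_L_lamplighter: "lamp_proj j \<in> group_vN lamplighter (carrier lamplighter)"
  unfolding lamp_proj_def group_vN_def
  by (intro comp_in_commutant lamp_eigenproj_in_L_lamplighter[unfolded group_vN_def])

lemma is_adjoint_lamp_proj: "is_adjoint lamplighter (lamp_proj j) (lamp_proj j)"
proof -
  have "is_adjoint lamplighter (lamp_proj j)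
      (lamp_eigenproj (cnj (- 1)) (j + 1) \<circ> lamp_eigenproj (cnj (- 1)) j)"
    unfolding lamp_proj_def
    by (rule is_adjoint_comp[OF lamp_eigenproj_bops lamp_eigenproj_bops
          is_adjoint_lamp_eigenproj is_adjoint_lamp_eigenproj])
  then show ?thesis by (simp add: lamp_proj_def lamp_eigenproj_commute[of _ "j + 1"])
qed

lemma lamp_proj_conj:
  assumes "(f, n) \<in> carrier lamplighter"
  shows "lreg lamplighter (f, n) \<circ> lamp_proj j \<circ> lreg lamplighter (inv\<^bsub>lamplighter\<^esub> (f, n)) = lamp_proj (j + n)"
  using assms
  by (simp add: lamp_proj_def lamplighter.lreg_conj_comp lamp_eigenproj_bops
      lamp_eigenproj_conj algebra_simps)

lemma lamp_proj_apply:
  assumes "x \<in> l2 lamplighter"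
  shows "lamp_proj j x (f, m) =
    (if (f, m) \<in> carrier lamplighter then lamp_proj_fibre j (\<lambda>f'. x (f', m)) f else 0)"
  using assms bops_l2[OF lamp_eigenproj_bops assms]
  by (simp add: lamp_proj_def lamp_proj_fibre_def lamp_eigenproj_apply toggle_in_carrier
      toggle_commute[of j] field_simps)

definition lamp_avg :: "((int \<Rightarrow> bool) \<times> int \<Rightarrow> complex) \<Rightarrow> (int \<Rightarrow> bool) \<times> int \<Rightarrow> complex" where
  "lamp_avg = lamp_eigenproj 1 (- 1) \<circ> lamp_eigenproj 1 1"

definition lit0_proj :: "((int \<Rightarrow> bool) \<times> int \<Rightarrow> complex) \<Rightarrow> (int \<Rightarrow> bool) \<times> int \<Rightarrow> complex" where
  "lit0_proj = proj_on lamplighter {h. fst h 0}"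

definition reflection :: "((int \<Rightarrow> bool) \<times> int \<Rightarrow> complex) \<Rightarrow> (int \<Rightarrow> bool) \<times> int \<Rightarrow> complex" where
  "reflection = op_lincomb lamplighter 1 (lreg lamplighter \<one>\<^bsub>lamplighter\<^esub>) (- 2) (lamp_avg \<circ> lit0_proj)"

definition reflection_fibre :: "((int \<Rightarrow> bool) \<Rightarrow> complex) \<Rightarrow> (int \<Rightarrow> bool) \<Rightarrow> complex" where
  "reflection_fibre X f = (if f 0
     then X f - (X f + X (toggle (- 1) f) + X (toggle 1 f) + X (toggle (- 1) (toggle 1 f))) / 2
     else X f)"

lemma reflection_bops: "reflection \<in> bops lamplighter"
  unfolding reflection_def lamp_avg_def lit0_proj_def
  by (intro op_lincomb_bops bops_comp lamp_eigenproj_bops proj_on_bops lamplighter.lreg_bops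
      lamplighter.one_closed)

lemma reflection_apply:
  assumes x: "x \<in> l2 lamplighter"
  shows "reflection x (f, m) =
    (if (f, m) \<in> carrier lamplighter then reflection_fibre (\<lambda>f'. x (f', m)) f else 0)"
proof -
  have P: "lit0_proj x \<in> l2 lamplighter" unfolding lit0_proj_def by (rule bops_l2[OF proj_on_bops x])
  have "lamp_avg (lit0_proj x) (f, m) = (if (f, m) \<in> carrier lamplighter then
      (if f 0 then (x (f, m) + x (toggle (- 1) f, m) + x (toggle 1 f, m) + x (toggle (- 1) (toggle 1 f), m)) / 4
       else 0) else 0)"
    using P bops_l2[OF lamp_eigenproj_bops P] x
    by (simp add: lamp_avg_def lamp_eigenproj_apply toggle_in_carrier toggle_apply_other toggle_commute[of "- 1"]
        lit0_proj_def proj_on_def l2_restrict_def field_simps)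
  then show ?thesis
    using x l2_vanishes_outside[OF x, of "(f, m)"]
    by (auto simp: reflection_def op_lincomb_def lamplighter.lreg_one_apply reflection_fibre_def field_simps)
qed

text \<open>\<open>Q P\<close> is annihilated from both sides by every \<open>p(j)\<close> with \<open>-2 \<le> j \<le> 1\<close>, since such a
  \<open>p(j)\<close> has a factor \<open>E(-1)\<close> or \<open>E(1)\<close>, while all other \<open>p(j)\<close> commute with \<open>Q\<close> and \<open>P\<close>.
  On fibres this becomes a finite check.\<close>

lemma reflection_fibre_lamp_proj_fibre:
  "reflection_fibre (lamp_proj_fibre j X) f = lamp_proj_fibre j (reflection_fibre X) f"
proof -
  consider "j = - 2" | "j = - 1" | "j = 0" | "j = 1" | "j \<notin> {- 2, - 1, 0, 1}" by auto
  then show ?thesis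
  proof cases
    case 5
    then have "j \<noteq> - 1" "j + 1 \<noteq> - 1" "j + 1 \<noteq> 0" "j + 1 \<noteq> 1" "j \<noteq> 1" "j \<noteq> 0" by auto
    then show ?thesis
      by (cases "f 0") (simp_all add: reflection_fibre_def lamp_proj_fibre_def toggle_def fun_upd_twist field_simps)
  qed (cases "f (- 1)"; cases "f 0"; cases "f 1";
       simp add: reflection_fibre_def lamp_proj_fibre_def toggle_def fun_upd_twist fun_upd_idem field_simps)+
qed

lemma lamp_proj_fibre_cong:
  "(f, m) \<in> carrier lamplighter \<Longrightarrow>
    lamp_proj_fibre j (\<lambda>f'. if (f', m) \<in> carrier lamplighter then Y f' else 0) f = lamp_proj_fibre j Y f"
  by (simp add: lamp_proj_fibre_def toggle_in_carrier)

lemma reflection_fibre_cong: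
  "(f, m) \<in> carrier lamplighter \<Longrightarrow>
    reflection_fibre (\<lambda>f'. if (f', m) \<in> carrier lamplighter then Y f' else 0) f = reflection_fibre Y f"
  by (simp add: reflection_fibre_def toggle_in_carrier)

lemma reflection_comm_lamp_proj: "reflection \<circ> lamp_proj j = lamp_proj j \<circ> reflection"
proof (rule bops_eqI)
  fix x assume x: "x \<in> l2 lamplighter"
  have px: "lamp_proj j x \<in> l2 lamplighter" and wx: "reflection x \<in> l2 lamplighter"
    by (simp_all add: bops_l2[OF lamp_proj_bops x] bops_l2[OF reflection_bops x])
  have "reflection (lamp_proj j x) (f, m) = lamp_proj j (reflection x) (f, m)" for f m
    using reflection_fibre_lamp_proj_fibre[of j "\<lambda>f'. x (f', m)" f]
    by (simp add: reflection_apply[OF px] lamp_proj_apply[OF x] lamp_proj_apply[OF wx] reflection_apply[OF x]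
        reflection_fibre_cong lamp_proj_fibre_cong)
  then show "(reflection \<circ> lamp_proj j) x = (lamp_proj j \<circ> reflection) x"
    by (auto simp: fun_eq_iff)
qed (intro bops_comp reflection_bops lamp_proj_bops)+

lemma l2_basis_one_lamplighter: "l2_basis \<one>\<^bsub>lamplighter\<^esub> (f, m) = (if f = (\<lambda>_. False) \<and> m = 0 then 1 else 0)"
  by (auto simp: l2_basis_def lamplighter_one)

lemma l2_basis_one_in_l2: "l2_basis \<one>\<^bsub>lamplighter\<^esub> \<in> l2 lamplighter"
  by (rule l2_basis_in_l2[OF lamplighter.one_closed])

lemma lamp_proj_basis_one: "lamp_proj 0 (l2_basis \<one>\<^bsub>lamplighter\<^esub>) (lamp 0) = - 1 / 4"
proof -
  have "toggle 0 (\<lambda>k. k = 0) = (\<lambda>_. False)" "toggle 1 (\<lambda>k. k = 0) \<noteq> (\<lambda>_. False)"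
    "toggle 0 (toggle 1 (\<lambda>k. k = 0)) \<noteq> (\<lambda>_. False)" "(\<lambda>k::int. k = 0) \<noteq> (\<lambda>_. False)"
    by (auto simp: toggle_def fun_eq_iff)
  then show ?thesis
    using lamp_in_carrier[of 0]
    by (simp add: lamp_def lamp_proj_apply[OF l2_basis_one_in_l2] lamp_proj_fibre_def l2_basis_one_lamplighter)
qed

lemma reflection_not_comm_lreg_lamp:
  "reflection \<circ> lreg lamplighter (lamp 0) \<noteq> lreg lamplighter (lamp 0) \<circ> reflection"
proof
  let ?\<delta> = "l2_basis \<one>\<^bsub>lamplighter\<^esub>"
  have l: "lreg lamplighter (lamp 0) ?\<delta> \<in> l2 lamplighter" "reflection ?\<delta> \<in> l2 lamplighter"
    by (simp_all add: bops_l2[OF lamplighter.lreg_bops[OF lamp_in_carrier] l2_basis_one_in_l2]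
        bops_l2[OF reflection_bops l2_basis_one_in_l2])
  have lamp0: "lamp 0 = ((\<lambda>k. k = 0), 0)" by (simp add: lamp_def)
  have e0: "toggle 0 (\<lambda>k. k = 0) = (\<lambda>_. False)" "toggle 0 (toggle (- 1) (\<lambda>k. k = 0)) \<noteq> (\<lambda>_. False)"
    "toggle 0 (toggle 1 (\<lambda>k. k = 0)) \<noteq> (\<lambda>_. False)"
    "toggle 0 (toggle (- 1) (toggle 1 (\<lambda>k. k = 0))) \<noteq> (\<lambda>_. False)"
    by (auto simp: toggle_def fun_eq_iff)
  assume "reflection \<circ> lreg lamplighter (lamp 0) = lreg lamplighter (lamp 0) \<circ> reflection"
  then have "reflection (lreg lamplighter (lamp 0) ?\<delta>) (lamp 0) = lreg lamplighter (lamp 0) (reflection ?\<delta>) (lamp 0)"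
    by (metis comp_apply)
  moreover have "reflection (lreg lamplighter (lamp 0) ?\<delta>) (lamp 0) = 1 / 2"
    using lamp_in_carrier[of 0] e0
    by (simp add: lamp0 reflection_apply[OF l(1), unfolded lamp0] reflection_fibre_def
        lreg_lamp_apply[OF l2_basis_one_in_l2, of 0, unfolded lamp0] toggle_in_carrier l2_basis_one_lamplighter)
  moreover have "lreg lamplighter (lamp 0) (reflection ?\<delta>) (lamp 0) = 1"
    using lamp_in_carrier[of 0] e0
    by (simp add: lamp0 reflection_apply[OF l2_basis_one_in_l2] reflection_fibre_def
        lreg_lamp_apply[OF l(2), of 0, unfolded lamp0] toggle_in_carrier l2_basis_one_lamplighter
        lamplighter_carrier)
  ultimately show False by simp
qed

definition lamp_algebra :: "(((int \<Rightarrow> bool) \<times> int \<Rightarrow> complex) \<Rightarrow> (int \<Rightarrow> bool) \<times> int \<Rightarrow> complex) set" where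
  "lamp_algebra = commutant lamplighter (commutant lamplighter (range lamp_proj))"

lemma von_neumann_algebra_lamp_algebra: "von_neumann_algebra lamplighter lamp_algebra"
  unfolding lamp_algebra_def
  by (rule von_neumann_algebra_commutant_commutant)
     (auto simp: star_closed_iff_is_adjoint lamp_proj_bops intro: is_adjoint_lamp_proj)

lemma lamp_algebra_subset_L_lamplighter: "lamp_algebra \<subseteq> group_vN lamplighter (carrier lamplighter)"
  unfolding lamp_algebra_def group_vN_def
  by (rule commutant_commutant_subset)
     (auto simp: lamp_proj_in_L_lamplighter[unfolded group_vN_def] lamplighter.lreg_bops)

lemma G_invariant_lamp_algebra: "G_invariant lamplighter lamp_algebra"
  unfolding lamp_algebra_def
proof (rule lamplighter.G_invariant_commutant_commutant)
  fix g s assume "g \<in> carrier lamplighter" "s \<in> range lamp_proj"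
  then show "lreg lamplighter g \<circ> s \<circ> lreg lamplighter (inv\<^bsub>lamplighter\<^esub> g) \<in> range lamp_proj"
    by (cases g) (auto simp: lamp_proj_conj)
qed (auto simp: lamp_proj_bops)

lemma lamp_proj_in_lamp_algebra: "lamp_proj j \<in> lamp_algebra"
  unfolding lamp_algebra_def by (rule subsetD[OF subset_commutant_commutant]) (auto simp: lamp_proj_bops)

lemma lreg_lamp_notin_lamp_algebra: "lreg lamplighter (lamp 0) \<notin> lamp_algebra"
proof
  assume "lreg lamplighter (lamp 0) \<in> lamp_algebra"
  moreover have "reflection \<in> commutant lamplighter (range lamp_proj)"
    using reflection_bops reflection_comm_lamp_proj by (auto simp: commutant_def)
  ultimately show False
    using reflection_not_comm_lreg_lamp by (auto simp: lamp_algebra_def commutant_def)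
qed

theorem proposition5p6:
  shows "\<not> has_ISR lamplighter"
proof
  assume "has_ISR lamplighter"
  then obtain N where N: "N \<lhd> lamplighter" and MN: "lamp_algebra = group_vN lamplighter N"
    using von_neumann_algebra_lamp_algebra lamp_algebra_subset_L_lamplighter G_invariant_lamp_algebra
    unfolding has_ISR_def by blast
  have sg: "subgroup N lamplighter" by (rule normal_imp_subgroup[OF N])
  have "lamp_proj 0 \<in> group_vN lamplighter N"
    using lamp_proj_in_lamp_algebra unfolding MN .
  then have "lamp 0 \<in> N"
    by (rule lamplighter.group_vN_basis_support[OF sg]) (simp add: lamp_proj_basis_one)
  then have "lreg lamplighter (lamp 0) \<in> lamp_algebra"
    unfolding MN by (rule lamplighter.lreg_in_group_vN[OF sg])
  with lreg_lamp_notin_lamp_algebra show False ..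
qed

end
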